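(* Let $n\ge 2$ and $k\ge 1$ be integers, and let $\mathcal{A}_n$ denote the set of Dyck $n$-paths whose terminal descent has even length and all of whose other descents to ground level (if any) have odd length. Then there is a bijection between the paths in $\mathcal{A}_n$ having exactly $k$ returns and the Dyck $(n-1)$-paths that contain exactly $k-1$ early hills.
   Context: A Dyck $n$-path is a lattice path consisting of $n$ upsteps $U=(1,1)$ and $n$ downsteps $D=(1,-1)$ that starts and ends at height $0$ (ground level) and never goes below ground level. A descent is a maximal run of consecutive downsteps; its length is the number of downsteps in it. The terminal descent is the descent that ends at the final point of the path. A return is a downstep ending at ground level, and a descent to ground level is a descent whose last step is a return. An early hill is an occurrence of three consecutive steps $UDU$ in which the first $U$ starts at ground level. *)

theory Defs
  imports Main
begin

datatype step = U | D

definition stepval :: "step \<Rightarrow> int" where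
  "stepval s = (if s = U then 1 else -1)"

definition height :: "step list \<Rightarrow> int" where
  "height p = sum_list (map stepval p)"

definition dyck :: "nat \<Rightarrow> step list \<Rightarrow> bool" where
  "dyck n p \<longleftrightarrow> length (filter (\<lambda>s. s = U) p) = n \<and> length (filter (\<lambda>s. s = D) p) = n
     \<and> (\<forall>i \<le> length p. height (take i p) \<ge> 0) \<and> height p = 0"

definition dyck_paths :: "nat \<Rightarrow> step list set" where
  "dyck_paths n = {p. dyck n p}"

text \<open>A descent: maximal run of downsteps occupying positions i, ..., j-1 (0-based),
  so it starts at the point after i steps and ends at the point after j steps;
  its length is j - i.\<close>
definition is_descent :: "step list \<Rightarrow> nat \<Rightarrow> nat \<Rightarrow> bool" where
  "is_descent p i j \<longleftrightarrow> i < j \<and> j \<le> length p \<and> (\<forall>k. i \<le> k \<and> k < j \<longrightarrow> p ! k = D)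
     \<and> (i = 0 \<or> p ! (i - 1) = U) \<and> (j = length p \<or> p ! j = U)"

definition is_ground_descent :: "step list \<Rightarrow> nat \<Rightarrow> nat \<Rightarrow> bool" where
  "is_ground_descent p i j \<longleftrightarrow> is_descent p i j \<and> height (take j p) = 0"

definition returns :: "step list \<Rightarrow> nat" where
  "returns p = card {i. i < length p \<and> p ! i = D \<and> height (take (Suc i) p) = 0}"

definition early_hills :: "step list \<Rightarrow> nat" where
  "early_hills p = card {i. i + 2 < length p \<and> p ! i = U \<and> p ! (i+1) = D \<and> p ! (i+2) = U
                             \<and> height (take i p) = 0}"

definition A_set :: "nat \<Rightarrow> step list set" where
  "A_set n = {p. dyck n p \<and>
      (\<forall>i. is_descent p i (length p) \<longrightarrow> even (length p - i)) \<and>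
      (\<forall>i j. is_ground_descent p i j \<and> j < length p \<longrightarrow> odd (j - i))}"

end

theory Submission
  imports Defs
begin

text \<open>
  Write a Dyck path as a sequence of prime components \<open>U w D\<close>, one per return, and
  code each \<open>w\<close> by a binary tree via \<open>Node l r \<mapsto> w\<^sub>l U w\<^sub>r D\<close>. The descent of
  \<open>U w D\<close> to ground level then has length one more than the right spine of the
  tree of \<open>w\<close>. Hence the paths of \<open>\<A>\<^sub>n\<close> with \<open>k\<close> returns are the lists of \<open>k\<close> trees
  whose right spines have even length, except the last one, whose right spine is odd.

  A tree with a right spine of even length \<open>2m\<close> is the same as the list of the \<open>m\<close>
  non-leaf trees \<open>Node a\<^sub>i b\<^sub>i\<close> formed by consecutive pairs of left subtrees along the
  spine. Splitting the last tree as \<open>Node P Q\<close>, concatenate these lists for the first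
  \<open>k - 1\<close> trees and for \<open>Q\<close>, separated by \<open>k - 1\<close> leaves, and append \<open>P\<close>. The result
  codes a Dyck \<open>(n-1)\<close>-path whose prime components equal to \<open>UD\<close>, other than the last
  component, are exactly the separators; such components are precisely the early hills.
\<close>

section \<open>Heights and nonnegative paths\<close>

lemma stepval_simps [simp]: "stepval U = 1" "stepval D = -1"
  by (simp_all add: stepval_def)

lemma height_Nil [simp]: "height [] = 0"
  and height_Cons [simp]: "height (s # p) = stepval s + height p"
  and height_append [simp]: "height (p @ q) = height p + height q"
  by (simp_all add: height_def)

fun nonneg :: "int \<Rightarrow> step list \<Rightarrow> bool" where
  "nonneg h [] \<longleftrightarrow> 0 \<le> h"
| "nonneg h (s # p) \<longleftrightarrow> 0 \<le> h \<and> nonneg (h + stepval s) p"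

lemma all_le_Suc_iff: "(\<forall>i \<le> Suc n. P i) \<longleftrightarrow> P 0 \<and> (\<forall>i \<le> n. P (Suc i))"
  by (metis Suc_le_mono le0 not0_implies_Suc)

lemma nonneg_iff: "nonneg h p \<longleftrightarrow> (\<forall>i \<le> length p. 0 \<le> h + height (take i p))"
proof (induction p arbitrary: h)
  case (Cons s p)
  show ?case
    by (simp only: length_Cons all_le_Suc_iff Cons.IH nonneg.simps) (simp add: add.assoc)
qed simp

lemma nonneg_start: "nonneg h p \<Longrightarrow> 0 \<le> h"
  by (cases p) auto

lemma nonneg_append: "nonneg h (p @ q) \<longleftrightarrow> nonneg h p \<and> nonneg (h + height p) q"
  by (induction p arbitrary: h) (auto simp: add.assoc dest: nonneg_start)

lemma int_count_U_minus_count_D: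
  "int (length (filter (\<lambda>s. s = U) p)) - int (length (filter (\<lambda>s. s = D) p)) = height p"
proof (induction p)
  case (Cons s p)
  then show ?case by (cases s) auto
qed simp

lemma count_U_plus_count_D:
  "length (filter (\<lambda>s. s = U) p) + length (filter (\<lambda>s. s = D) p) = length p"
proof (induction p)
  case (Cons s p)
  then show ?case by (cases s) auto
qed simp

lemma dyck_iff_nonneg: "dyck n p \<longleftrightarrow> nonneg 0 p \<and> height p = 0 \<and> length p = 2 * n"
  unfolding dyck_def nonneg_iff
  using int_count_U_minus_count_D[of p] count_U_plus_count_D[of p] by auto

section \<open>Binary trees and Dyck paths\<close>

datatype tree = Leaf | Node tree tree

fun tree_path :: "tree \<Rightarrow> step list" where
  "tree_path Leaf = []"
| "tree_path (Node l r) = tree_path l @ U # tree_path r @ [D]"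

lemma height_tree_path [simp]: "height (tree_path t) = 0"
  by (induction t) auto

lemma nonneg_tree_path: "0 \<le> h \<Longrightarrow> nonneg h (tree_path t)"
  by (induction t arbitrary: h) (auto simp: nonneg_append)

lemma length_tree_path: "length (tree_path t) = 2 * size t"
  by (induction t) auto

lemma tree_path_Node_Cons: "t \<noteq> Leaf \<Longrightarrow> \<exists>q. tree_path t = U # q"
proof (induction t)
  case (Node l r)
  then show ?case by (cases "l = Leaf") auto
qed simp

fun graft :: "tree \<Rightarrow> tree \<Rightarrow> tree" where
  "graft c Leaf = c"
| "graft c (Node l r) = Node (graft c l) r"

lemma graft_Leaf [simp]: "graft Leaf t = t"
  by (induction t) auto

text \<open>\<open>parse\<close> is a shift-reduce parser inverting \<open>tree_path\<close>.\<close>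

fun parse :: "tree list \<Rightarrow> step list \<Rightarrow> tree list" where
  "parse st [] = st"
| "parse st (U # p) = parse (Leaf # st) p"
| "parse (r # l # st) (D # p) = parse (Node l r # st) p"
| "parse st (D # p) = st"

lemma parse_tree_path: "parse (c # st) (tree_path t @ p) = parse (graft c t # st) p"
  by (induction t arbitrary: c st p) auto

lemma inj_tree_path: "inj tree_path"
  by (rule injI) (metis append_Nil2 graft_Leaf list.inject parse.simps(1) parse_tree_path)

text \<open>A nonnegative path ending at height \<open>h\<close> is \<open>w\<^sub>0 U w\<^sub>1 \<dots> U w\<^sub>h\<close> with balanced \<open>w\<^sub>i\<close>;
  \<open>stack_path\<close> lists the trees of these pieces in reverse order.\<close>

fun stack_path :: "tree list \<Rightarrow> step list" where
  "stack_path [] = []"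
| "stack_path [t] = tree_path t"
| "stack_path (t # t' # ts) = stack_path (t' # ts) @ U # tree_path t"

lemma nonneg_eq_stack_path:
  "nonneg 0 p \<Longrightarrow> height p = int h \<Longrightarrow> \<exists>ts. length ts = Suc h \<and> p = stack_path ts"
proof (induction p arbitrary: h rule: rev_induct)
  case Nil
  then show ?case by (intro exI[of _ "[Leaf]"]) auto
next
  case (snoc s p)
  from snoc.prems have nonneg_p: "nonneg 0 p" by (simp add: nonneg_append)
  then have "0 \<le> height p"
    using nonneg_iff[of 0 p] by (metis add_0 order_refl take_all)
  show ?case
  proof (cases s)
    case U
    with snoc.prems \<open>0 \<le> height p\<close> obtain h' where h': "h = Suc h'" "height p = int h'"
      by (cases h) auto
    from snoc.IH[OF nonneg_p h'(2)] obtain ts where ts: "length ts = Suc h'" "p = stack_path ts"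
      by blast
    then obtain t ts' where "ts = t # ts'" by (cases ts) auto
    then show ?thesis using ts U h' by (intro exI[of _ "Leaf # ts"]) auto
  next
    case D
    with snoc.prems have "height p = int (Suc h)" by auto
    from snoc.IH[OF nonneg_p this] obtain ts where ts: "length ts = Suc (Suc h)" "p = stack_path ts"
      by blast
    then obtain r l ts' where ts': "ts = r # l # ts'" by (metis length_Suc_conv)
    show ?thesis
    proof (cases ts')
      case Nil
      then show ?thesis using ts ts' D by (intro exI[of _ "[Node l r]"]) auto
    next
      case Cons
      then show ?thesis using ts ts' D by (intro exI[of _ "Node l r # ts'"]) auto
    qed
  qed
qed

lemma balanced_eq_tree_path: "nonneg 0 p \<Longrightarrow> height p = 0 \<Longrightarrow> \<exists>t. p = tree_path t"
  using nonneg_eq_stack_path[of p 0] by (auto simp: length_Suc_conv)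

section \<open>Prime decomposition\<close>

definition primes_path :: "tree list \<Rightarrow> step list" where
  "primes_path rs = concat (map (\<lambda>r. U # tree_path r @ [D]) rs)"

lemma primes_path_simps [simp]:
  "primes_path [] = []"
  "primes_path (r # rs) = U # tree_path r @ D # primes_path rs"
  "primes_path (rs @ rs') = primes_path rs @ primes_path rs'"
  by (auto simp: primes_path_def)

definition semilength :: "tree list \<Rightarrow> nat" where
  "semilength rs = sum_list (map (\<lambda>r. size r + 1) rs)"

lemma semilength_simps [simp]:
  "semilength [] = 0"
  "semilength (r # rs) = size r + 1 + semilength rs"
  "semilength (rs @ rs') = semilength rs + semilength rs'"
  by (auto simp: semilength_def)

fun spine :: "tree \<Rightarrow> tree list" where
  "spine Leaf = []"
| "spine (Node l r) = spine l @ [r]"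

lemma tree_path_eq_primes_path: "tree_path t = primes_path (spine t)"
  by (induction t) auto

lemma tree_path_foldl_Node: "tree_path (foldl Node t rs) = tree_path t @ primes_path rs"
  by (induction rs arbitrary: t) auto

lemma spine_foldl_Node: "spine (foldl Node t rs) = spine t @ rs"
  by (induction rs arbitrary: t) auto

lemma inj_primes_path: "inj primes_path"
proof (rule injI)
  fix rs rs' assume "primes_path rs = primes_path rs'"
  then have "tree_path (foldl Node Leaf rs) = tree_path (foldl Node Leaf rs')"
    using tree_path_foldl_Node[of Leaf] by simp
  then have "foldl Node Leaf rs = foldl Node Leaf rs'"
    by (rule injD[OF inj_tree_path])
  then show "rs = rs'" using spine_foldl_Node[of Leaf] by (metis append_Nil spine.simps(1))
qed

lemma height_primes_path [simp]: "height (primes_path rs) = 0"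
  by (induction rs) auto

lemma nonneg_primes_path: "0 \<le> h \<Longrightarrow> nonneg h (primes_path rs)"
  by (induction rs arbitrary: h) (auto simp: nonneg_append nonneg_tree_path)

lemma length_primes_path: "length (primes_path rs) = 2 * semilength rs"
  by (induction rs) (auto simp: length_tree_path)

lemma dyck_iff_primes_path: "dyck n p \<longleftrightarrow> (\<exists>rs. p = primes_path rs \<and> semilength rs = n)"
  unfolding dyck_iff_nonneg
  using balanced_eq_tree_path tree_path_eq_primes_path nonneg_primes_path length_primes_path
  by fastforce

section \<open>Returns and early hills of a prime decomposition\<close>

lemma card_less_Suc_split:
  "card {i. i < Suc m \<and> P i} = (if P 0 then 1 else 0) + card {i. i < m \<and> P (Suc i)}"
proof -
  have split: "{i. i < Suc m \<and> P i} = {i. i = 0 \<and> P 0} \<union> Suc ` {i. i < m \<and> P (Suc i)}"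
    by (auto simp: less_Suc_eq_0_disj)
  have "card ({i. i = 0 \<and> P 0} \<union> Suc ` {i. i < m \<and> P (Suc i)})
        = card {i::nat. i = 0 \<and> P 0} + card (Suc ` {i. i < m \<and> P (Suc i)})"
    by (subst card_Un_disjoint) auto
  also have "card (Suc ` {i. i < m \<and> P (Suc i)}) = card {i. i < m \<and> P (Suc i)}"
    by (rule card_image) auto
  also have "card {i::nat. i = 0 \<and> P 0} = (if P 0 then 1 else 0)"
    by auto
  finally show ?thesis using split by simp
qed

definition returns_from :: "int \<Rightarrow> step list \<Rightarrow> nat" where
  "returns_from h p = card {i. i < length p \<and> p ! i = D \<and> h + height (take (Suc i) p) = 0}"

lemma returns_from_Nil [simp]: "returns_from h [] = 0"
  by (simp add: returns_from_def)

lemma returns_from_Cons: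
  "returns_from h (s # p) = (if s = D \<and> h + stepval s = 0 then 1 else 0) + returns_from (h + stepval s) p"
  unfolding returns_from_def by (simp only: length_Cons card_less_Suc_split) (simp add: add.assoc)

lemma returns_from_append:
  "nonneg (h - 1) p \<Longrightarrow> returns_from h (p @ q) = returns_from (h + height p) q"
proof (induction p arbitrary: h)
  case (Cons s p)
  have "nonneg (h + stepval s - 1) p" using Cons.prems by (simp add: algebra_simps)
  moreover have "0 \<le> h - 1 + stepval s" using Cons.prems by (cases p) auto
  ultimately show ?case using Cons.IH[of "h + stepval s"] by (auto simp: returns_from_Cons add.assoc)
qed simp

lemma returns_primes_path: "returns (primes_path rs) = length rs"
proof -
  have "returns_from 0 (primes_path rs) = length rs"
  proof (induction rs)
    case (Cons r rs)
    have "returns_from 0 (primes_path (r # rs)) = returns_from 1 (tree_path r @ D # primes_path rs)"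
      by (simp add: returns_from_Cons)
    also have "\<dots> = returns_from 1 (D # primes_path rs)"
      by (subst returns_from_append) (auto simp: nonneg_tree_path)
    also have "\<dots> = 1 + returns_from 0 (primes_path rs)"
      by (simp add: returns_from_Cons)
    finally show ?case using Cons by simp
  qed simp
  then show ?thesis by (simp add: returns_def returns_from_def)
qed

definition early_hills_from :: "int \<Rightarrow> step list \<Rightarrow> nat" where
  "early_hills_from h p = card {i. i < length p \<and> i + 2 < length p \<and> p ! i = U \<and> p ! (i+1) = D
                                   \<and> p ! (i+2) = U \<and> h + height (take i p) = 0}"

lemma early_hills_from_Nil [simp]: "early_hills_from h [] = 0"
  by (simp add: early_hills_from_def)

lemma early_hills_from_Cons:
  "early_hills_from h (s # p) =
     (if s = U \<and> 1 < length p \<and> p ! 0 = D \<and> p ! 1 = U \<and> h = 0 then 1 else 0)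
     + early_hills_from (h + stepval s) p"
  unfolding early_hills_from_def
  by (simp only: length_Cons card_less_Suc_split) (simp add: add.assoc numeral_2_eq_2)

lemma early_hills_from_append:
  "nonneg (h - 1) p \<Longrightarrow> early_hills_from h (p @ q) = early_hills_from (h + height p) q"
proof (induction p arbitrary: h)
  case (Cons s p)
  have "nonneg (h + stepval s - 1) p" using Cons.prems by (simp add: algebra_simps)
  moreover have "h \<noteq> 0" using Cons.prems by auto
  ultimately show ?case
    using Cons.IH[of "h + stepval s"] by (auto simp: early_hills_from_Cons add.assoc)
qed simp

fun inner_hills :: "tree list \<Rightarrow> nat" where
  "inner_hills [] = 0"
| "inner_hills (r # rs) = (if r = Leaf \<and> rs \<noteq> [] then 1 else 0) + inner_hills rs"

lemma inner_hills_eq: "inner_hills rs = length (filter (\<lambda>r. r = Leaf) (butlast rs))"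
  by (induction rs) auto

lemma early_hills_primes_path: "early_hills (primes_path rs) = inner_hills rs"
proof -
  have "early_hills_from 0 (primes_path rs) = inner_hills rs"
  proof (induction rs)
    case (Cons r rs)
    let ?q = "tree_path r @ D # primes_path rs"
    have hill_iff: "(1 < length ?q \<and> ?q ! 0 = D \<and> ?q ! 1 = U) \<longleftrightarrow> (r = Leaf \<and> rs \<noteq> [])"
    proof (cases "r = Leaf")
      case True
      then show ?thesis by (cases rs) auto
    next
      case False
      then obtain q where "tree_path r = U # q" using tree_path_Node_Cons by blast
      then show ?thesis using False by auto
    qed
    have "early_hills_from 0 (primes_path (r # rs))
          = (if r = Leaf \<and> rs \<noteq> [] then 1 else 0) + early_hills_from 1 ?q"
      using hill_iff by (simp add: early_hills_from_Cons)
    also have "early_hills_from 1 ?q = early_hills_from 1 (D # primes_path rs)"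
      by (subst early_hills_from_append) (auto simp: nonneg_tree_path)
    also have "\<dots> = early_hills_from 0 (primes_path rs)"
      by (simp add: early_hills_from_Cons)
    finally show ?case using Cons by simp
  qed simp
  moreover have "early_hills (primes_path rs) = early_hills_from 0 (primes_path rs)"
    unfolding early_hills_def early_hills_from_def by (rule arg_cong[where f = card]) auto
  ultimately show ?thesis by simp
qed

section \<open>Descents\<close>

definition trailing_downs :: "step list \<Rightarrow> nat" where
  "trailing_downs q = length (takeWhile (\<lambda>s. s = D) (rev q))"

lemma trailing_downs_le: "trailing_downs q \<le> length q"
  unfolding trailing_downs_def by (metis length_rev length_takeWhile_le)

lemma trailing_downs_Nil [simp]: "trailing_downs [] = 0"
  and trailing_downs_snoc_D [simp]: "trailing_downs (q @ [D]) = Suc (trailing_downs q)"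
  and trailing_downs_snoc_U [simp]: "trailing_downs (q @ [U]) = 0"
  by (simp_all add: trailing_downs_def)

lemma nth_in_trailing_downs:
  assumes "j \<le> length p" "k < j" "j - trailing_downs (take j p) \<le> k"
  shows "p ! k = D"
proof -
  let ?q = "take j p"
  have "j - Suc k < length (takeWhile (\<lambda>s. s = D) (rev ?q))"
    using assms unfolding trailing_downs_def by linarith
  then have "rev ?q ! (j - Suc k) = D"
    by (metis (mono_tags) nth_mem set_takeWhileD takeWhile_nth)
  moreover have "rev ?q ! (j - Suc k) = ?q ! k"
    using assms by (subst rev_nth) (auto simp: Suc_diff_Suc)
  ultimately show ?thesis using assms by simp
qed

lemma nth_before_trailing_downs:
  assumes "j \<le> length p" "trailing_downs (take j p) < j"
  shows "p ! (j - trailing_downs (take j p) - 1) \<noteq> D"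
proof -
  let ?q = "take j p"
  let ?t = "trailing_downs ?q"
  have "length (takeWhile (\<lambda>s. s = D) (rev ?q)) < length (rev ?q)"
    using assms unfolding trailing_downs_def by simp
  from nth_length_takeWhile[OF this] have "rev ?q ! ?t \<noteq> D"
    unfolding trailing_downs_def by simp
  moreover have "rev ?q ! ?t = ?q ! (j - ?t - 1)"
    using assms by (subst rev_nth) auto
  ultimately show ?thesis using assms by simp
qed

lemma run_le_trailing_downs:
  assumes "j \<le> length p" "\<forall>k. i \<le> k \<and> k < j \<longrightarrow> p ! k = D"
  shows "j - i \<le> trailing_downs (take j p)"
  unfolding trailing_downs_def
proof (rule length_takeWhile_less_P_nth)
  fix m assume m: "m < j - i"
  have "rev (take j p) ! m = p ! (j - Suc m)"
    using m assms by (subst rev_nth) auto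
  also have "\<dots> = D" using assms m by auto
  finally show "rev (take j p) ! m = D" .
qed (use assms in simp)

lemma is_descent_iff:
  "is_descent p i j \<longleftrightarrow>
     j \<le> length p \<and> (j = length p \<or> p ! j = U) \<and> 0 < trailing_downs (take j p)
     \<and> i = j - trailing_downs (take j p)"
  (is "_ \<longleftrightarrow> ?in_range \<and> ?end \<and> ?t > 0 \<and> i = j - ?t")
proof
  assume "is_descent p i j"
  then have j: "j \<le> length p" "i < j" "\<forall>k. i \<le> k \<and> k < j \<longrightarrow> p ! k = D"
    "i = 0 \<or> p ! (i - 1) = U" "j = length p \<or> p ! j = U"
    unfolding is_descent_def by auto
  have run: "j - i \<le> ?t" using run_le_trailing_downs[of j p i] j(1,3) by blast
  have "i = j - ?t"
  proof (rule ccontr)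
    assume "i \<noteq> j - ?t"
    then have "j - ?t < i" using run by linarith
    then have "i \<noteq> 0" "p ! (i - 1) = D"
      using nth_in_trailing_downs[of j p "i - 1"] j(1,2) by auto
    then show False using j(4) by simp
  qed
  then show "?in_range \<and> ?end \<and> ?t > 0 \<and> i = j - ?t" using j run by auto
next
  assume a: "?in_range \<and> ?end \<and> ?t > 0 \<and> i = j - ?t"
  have "?t \<le> j" using trailing_downs_le[of "take j p"] a by simp
  show "is_descent p i j"
    unfolding is_descent_def
  proof (intro conjI allI impI)
    show "i < j" "j \<le> length p" "j = length p \<or> p ! j = U"
      using a \<open>?t \<le> j\<close> by auto
    show "p ! k = D" if "i \<le> k \<and> k < j" for k
      using that nth_in_trailing_downs[of j p k] a by auto
    show "i = 0 \<or> p ! (i - 1) = U"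
    proof (cases "?t < j")
      case True
      then have "p ! (i - 1) \<noteq> D" using nth_before_trailing_downs[of j p] a by auto
      then show ?thesis by (cases "p ! (i - 1)") auto
    next
      case False
      then show ?thesis using a \<open>?t \<le> j\<close> by auto
    qed
  qed
qed

fun right_spine_length :: "tree \<Rightarrow> nat" where
  "right_spine_length Leaf = 0"
| "right_spine_length (Node l r) = Suc (right_spine_length r)"

lemma trailing_downs_U_tree_path: "trailing_downs (q @ U # tree_path r) = right_spine_length r"
proof (induction r arbitrary: q)
  case (Node l r)
  show ?case
    using Node.IH(2)[of "q @ U # tree_path l"]
      trailing_downs_snoc_D[of "(q @ U # tree_path l) @ U # tree_path r"] by simp
qed simp

lemma trailing_downs_primes_path_snoc:
  "trailing_downs (primes_path (rs @ [r])) = Suc (right_spine_length r)"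
  using trailing_downs_U_tree_path[of "primes_path rs" r]
    trailing_downs_snoc_D[of "primes_path rs @ U # tree_path r"] by simp

lemma ground_prefix_primes_path:
  "j \<le> length (primes_path rs) \<Longrightarrow> height (take j (primes_path rs)) = 0
   \<Longrightarrow> \<exists>m \<le> length rs. take j (primes_path rs) = primes_path (take m rs)"
proof (induction rs arbitrary: j)
  case (Cons r rs)
  let ?a = "length (tree_path r)"
  show ?case
  proof (cases j)
    case 0
    then show ?thesis by (intro exI[of _ 0]) simp
  next
    case (Suc j')
    consider "j' \<le> ?a" | "j' = Suc ?a" | j'' where "j' = Suc ?a + j''" "j'' > 0"
      by (metis add.right_neutral add_Suc less_add_Suc1 linorder_not_le nat_le_iff_add not_gr_zero
          not_less_eq_eq)
    then show ?thesis
    proof cases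
      case 1
      then have "take j (primes_path (r # rs)) = U # take j' (tree_path r)" using Suc by simp
      moreover have "0 \<le> height (take j' (tree_path r))"
        using nonneg_tree_path[of 0 r] 1 by (simp add: nonneg_iff)
      ultimately show ?thesis using Cons.prems by simp
    next
      case 2
      then have "take j (primes_path (r # rs)) = primes_path (take 1 (r # rs))" using Suc by simp
      then show ?thesis by (intro exI[of _ 1]) simp
    next
      case 3
      then have prefix: "take j (primes_path (r # rs)) = U # tree_path r @ D # take j'' (primes_path rs)"
        using Suc by (simp add: take_Cons')
      then have "height (take j'' (primes_path rs)) = 0" using Cons.prems by simp
      moreover have "j'' \<le> length (primes_path rs)" using Cons.prems Suc 3 by simp
      ultimately obtain m where "m \<le> length rs" "take j'' (primes_path rs) = primes_path (take m rs)"
        using Cons.IH by blast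
      then show ?thesis using prefix by (intro exI[of _ "Suc m"]) simp
    qed
  qed
qed simp

lemma terminal_descent_even_iff:
  assumes "rs \<noteq> []"
  shows "(\<forall>i. is_descent (primes_path rs) i (length (primes_path rs))
              \<longrightarrow> even (length (primes_path rs) - i))
         \<longleftrightarrow> odd (right_spine_length (last rs))"
proof -
  let ?p = "primes_path rs"
  have t: "trailing_downs ?p = Suc (right_spine_length (last rs))"
    using trailing_downs_primes_path_snoc assms by (metis append_butlast_last_id)
  have "is_descent ?p i (length ?p) \<longleftrightarrow> i = length ?p - trailing_downs ?p" for i
    using t by (simp add: is_descent_iff)
  then show ?thesis using t trailing_downs_le[of ?p] by auto
qed

lemma ground_descents_odd_iff:
  assumes "rs \<noteq> []"
  shows "(\<forall>i j. is_ground_descent (primes_path rs) i j \<and> j < length (primes_path rs) \<longrightarrow> odd (j - i))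
         \<longleftrightarrow> (\<forall>r \<in> set (butlast rs). even (right_spine_length r))"
proof
  assume odd_descents: "\<forall>i j. is_ground_descent (primes_path rs) i j \<and> j < length (primes_path rs)
                          \<longrightarrow> odd (j - i)"
  show "\<forall>r \<in> set (butlast rs). even (right_spine_length r)"
  proof
    fix r assume "r \<in> set (butlast rs)"
    then obtain as bs where "butlast rs = as @ r # bs" by (meson split_list)
    then have rs: "rs = (as @ [r]) @ (bs @ [last rs])"
      using assms by (metis append.assoc append_Cons append_Nil append_butlast_last_id)
    let ?p = "primes_path rs" and ?j = "length (primes_path (as @ [r]))"
    obtain r' rs' where "bs @ [last rs] = r' # rs'" by (cases bs) auto
    then have p: "?p = primes_path (as @ [r]) @ U # tree_path r' @ D # primes_path rs'"
      using rs by (metis primes_path_simps(2,3))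
    have t: "trailing_downs (take ?j ?p) = Suc (right_spine_length r)"
      using p trailing_downs_primes_path_snoc by simp
    have "is_ground_descent ?p (?j - Suc (right_spine_length r)) ?j"
      unfolding is_ground_descent_def using p t by (simp add: is_descent_iff nth_append)
    moreover have "?j < length ?p" using p by simp
    ultimately have "odd (?j - (?j - Suc (right_spine_length r)))"
      using odd_descents by blast
    moreover have "Suc (right_spine_length r) \<le> ?j"
      using t p trailing_downs_le[of "take ?j ?p"] by simp
    ultimately show "even (right_spine_length r)" by (metis diff_diff_cancel even_Suc)
  qed
next
  assume even_spines: "\<forall>r \<in> set (butlast rs). even (right_spine_length r)"
  show "\<forall>i j. is_ground_descent (primes_path rs) i j \<and> j < length (primes_path rs) \<longrightarrow> odd (j - i)"
  proof (intro allI impI)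
    let ?p = "primes_path rs"
    fix i j assume ij: "is_ground_descent ?p i j \<and> j < length ?p"
    then have j: "j \<le> length ?p" "0 < trailing_downs (take j ?p)" "i = j - trailing_downs (take j ?p)"
      and "height (take j ?p) = 0"
      unfolding is_ground_descent_def is_descent_iff by auto
    then obtain m where m: "m \<le> length rs" "take j ?p = primes_path (take m rs)"
      using ground_prefix_primes_path by blast
    have "m \<noteq> 0" using j(2) m(2) by (metis less_irrefl primes_path_simps(1) take0 trailing_downs_Nil)
    moreover have "m \<noteq> length rs" using ij m by (metis length_take min.absorb2 nless_le take_all)
    ultimately have "m - 1 < length (butlast rs)" using m(1) by simp
    then have r: "rs ! (m - 1) \<in> set (butlast rs)" by (metis nth_butlast nth_mem)
    have "take m rs = take (m - 1) rs @ [rs ! (m - 1)]"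
      using \<open>m \<noteq> 0\<close> \<open>m - 1 < length (butlast rs)\<close> take_Suc_conv_app_nth[of "m - 1" rs] by simp
    then have "trailing_downs (take j ?p) = Suc (right_spine_length (rs ! (m - 1)))"
      using m(2) trailing_downs_primes_path_snoc by simp
    moreover have "trailing_downs (take j ?p) \<le> j" using trailing_downs_le[of "take j ?p"] j by simp
    ultimately show "odd (j - i)" using even_spines r j(3) by auto
  qed
qed

section \<open>The bijection on tree lists\<close>

definition A_trees :: "nat \<Rightarrow> nat \<Rightarrow> tree list set" where
  "A_trees n k = {rs. length rs = k \<and> semilength rs = n
     \<and> (\<forall>r \<in> set (butlast rs). even (right_spine_length r)) \<and> odd (right_spine_length (last rs))}"

definition hill_trees :: "nat \<Rightarrow> nat \<Rightarrow> tree list set" where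
  "hill_trees n h = {ss. semilength ss = n \<and> inner_hills ss = h}"

lemma A_paths_eq_image:
  assumes "1 \<le> k"
  shows "{p \<in> A_set n. returns p = k} = primes_path ` A_trees n k"
proof (intro set_eqI iffI)
  fix p assume "p \<in> {p \<in> A_set n. returns p = k}"
  then have p: "dyck n p" "\<forall>i. is_descent p i (length p) \<longrightarrow> even (length p - i)"
    "\<forall>i j. is_ground_descent p i j \<and> j < length p \<longrightarrow> odd (j - i)" "returns p = k"
    by (auto simp: A_set_def)
  obtain rs where rs: "p = primes_path rs" "semilength rs = n"
    using p(1) dyck_iff_primes_path by blast
  have "length rs = k" using p(4) rs returns_primes_path by simp
  then have "rs \<noteq> []" using assms by auto
  then show "p \<in> primes_path ` A_trees n k"
    using rs \<open>length rs = k\<close> p(2,3) terminal_descent_even_iff ground_descents_odd_iff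
    by (auto simp: A_trees_def)
next
  fix p assume "p \<in> primes_path ` A_trees n k"
  then obtain rs where rs: "p = primes_path rs" "rs \<in> A_trees n k" by blast
  then have "rs \<noteq> []" using assms by (auto simp: A_trees_def)
  then show "p \<in> {p \<in> A_set n. returns p = k}"
    using rs dyck_iff_primes_path returns_primes_path
      terminal_descent_even_iff ground_descents_odd_iff
    by (auto simp: A_set_def A_trees_def)
qed

lemma hill_paths_eq_image:
  "{q \<in> dyck_paths n. early_hills q = h} = primes_path ` hill_trees n h"
  unfolding dyck_paths_def hill_trees_def
  using dyck_iff_primes_path early_hills_primes_path by fastforce

fun pair_spine :: "tree \<Rightarrow> tree list" where
  "pair_spine Leaf = []"
| "pair_spine (Node a Leaf) = []"
| "pair_spine (Node a (Node b q)) = Node a b # pair_spine q"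

fun unpair_spine :: "tree list \<Rightarrow> tree" where
  "unpair_spine [] = Leaf"
| "unpair_spine (Leaf # ts) = Leaf"
| "unpair_spine (Node a b # ts) = Node a (Node b (unpair_spine ts))"

lemma unpair_pair_spine: "even (right_spine_length r) \<Longrightarrow> unpair_spine (pair_spine r) = r"
  by (induction r rule: pair_spine.induct) auto

lemma pair_unpair_spine: "Leaf \<notin> set ts \<Longrightarrow> pair_spine (unpair_spine ts) = ts"
  by (induction ts rule: unpair_spine.induct) auto

lemma Leaf_notin_pair_spine: "Leaf \<notin> set (pair_spine r)"
  by (induction r rule: pair_spine.induct) auto

lemma even_right_spine_length_unpair_spine: "even (right_spine_length (unpair_spine ts))"
  by (induction ts rule: unpair_spine.induct) auto

lemma semilength_pair_spine: "even (right_spine_length r) \<Longrightarrow> semilength (pair_spine r) = size r"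
  by (induction r rule: pair_spine.induct) auto

lemma size_unpair_spine: "Leaf \<notin> set ts \<Longrightarrow> size (unpair_spine ts) = semilength ts"
  by (induction ts rule: unpair_spine.induct) auto

fun join_with_leaves :: "tree list list \<Rightarrow> tree list" where
  "join_with_leaves [] = []"
| "join_with_leaves [ts] = ts"
| "join_with_leaves (ts # ts' # tss) = ts @ Leaf # join_with_leaves (ts' # tss)"

fun split_at_leaves :: "tree list \<Rightarrow> tree list list" where
  "split_at_leaves [] = [[]]"
| "split_at_leaves (t # ts) =
     (if t = Leaf then [] # split_at_leaves ts
      else (t # hd (split_at_leaves ts)) # tl (split_at_leaves ts))"

lemma split_at_leaves_neq_Nil [simp]: "split_at_leaves ts \<noteq> []"
  by (induction ts) auto

lemma join_with_leaves_Cons_Cons: "join_with_leaves ((t # ts) # tss) = t # join_with_leaves (ts # tss)"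
  by (cases tss) auto

lemma join_split_at_leaves: "join_with_leaves (split_at_leaves ts) = ts"
proof (induction ts)
  case (Cons t ts)
  then show ?case
    by (cases "split_at_leaves ts") (auto simp: join_with_leaves_Cons_Cons)
qed simp

lemma Leaf_notin_split_at_leaves: "ts' \<in> set (split_at_leaves ts) \<Longrightarrow> Leaf \<notin> set ts'"
proof (induction ts arbitrary: ts')
  case (Cons t ts)
  then show ?case by (cases "split_at_leaves ts") (auto split: if_splits)
qed simp

lemma length_split_at_leaves:
  "length (split_at_leaves ts) = Suc (length (filter (\<lambda>t. t = Leaf) ts))"
proof (induction ts)
  case (Cons t ts)
  then show ?case by (cases "split_at_leaves ts") auto
qed simp

lemma split_at_leaves_append:
  "Leaf \<notin> set ts \<Longrightarrow> split_at_leaves (ts @ ts') = (ts @ hd (split_at_leaves ts')) # tl (split_at_leaves ts')"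
  by (induction ts) auto

lemma split_join_with_leaves:
  "tss \<noteq> [] \<Longrightarrow> \<forall>ts \<in> set tss. Leaf \<notin> set ts \<Longrightarrow> split_at_leaves (join_with_leaves tss) = tss"
proof (induction tss rule: join_with_leaves.induct)
  case (2 ts)
  then show ?case using split_at_leaves_append[of ts "[]"] by simp
next
  case (3 ts ts' tss)
  then show ?case using split_at_leaves_append[of ts "Leaf # join_with_leaves (ts' # tss)"] by simp
qed simp

lemma count_Leaf_join_with_leaves: "\<forall>ts \<in> set tss. Leaf \<notin> set ts \<Longrightarrow>
   length (filter (\<lambda>t. t = Leaf) (join_with_leaves tss)) = length tss - 1"
  by (induction tss rule: join_with_leaves.induct) (auto simp: filter_empty_conv)

lemma semilength_join_with_leaves:
  "semilength (join_with_leaves tss) = sum_list (map semilength tss) + (length tss - 1)"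
  by (induction tss rule: join_with_leaves.induct) auto

definition to_hills :: "tree list \<Rightarrow> tree list" where
  "to_hills rs = (case last rs of
      Leaf \<Rightarrow> []
    | Node P Q \<Rightarrow> join_with_leaves (map pair_spine (butlast rs) @ [pair_spine Q]) @ [P])"

definition of_hills :: "tree list \<Rightarrow> tree list" where
  "of_hills ss = (let tss = split_at_leaves (butlast ss) in
     map unpair_spine (butlast tss) @ [Node (last ss) (unpair_spine (last tss))])"

lemma to_hills_A_trees:
  assumes "1 \<le> k" "rs \<in> A_trees n k"
  shows "to_hills rs \<in> hill_trees (n - 1) (k - 1) \<and> of_hills (to_hills rs) = rs"
proof -
  from assms have rs: "length rs = k" "semilength rs = n"
    "\<forall>r \<in> set (butlast rs). even (right_spine_length r)" "odd (right_spine_length (last rs))"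
    by (auto simp: A_trees_def)
  obtain P Q where PQ: "last rs = Node P Q" using rs(4) by (cases "last rs") auto
  define bs where "bs = butlast rs"
  have rs_eq: "rs = bs @ [Node P Q]"
    using PQ assms rs(1) unfolding bs_def by (metis append_butlast_last_id list.size(3) not_one_le_zero)
  have even_Q: "even (right_spine_length Q)" using rs(4) PQ by simp
  have even_bs: "\<forall>r \<in> set bs. even (right_spine_length r)" using rs(3) bs_def by simp
  define tss where "tss = map pair_spine bs @ [pair_spine Q]"
  have no_Leaf: "\<forall>ts \<in> set tss. Leaf \<notin> set ts" using Leaf_notin_pair_spine tss_def by auto
  have to_hills: "to_hills rs = join_with_leaves tss @ [P]"
    unfolding to_hills_def tss_def bs_def using PQ by simp
  have "inner_hills (to_hills rs) = k - 1"
    using to_hills count_Leaf_join_with_leaves[OF no_Leaf] rs(1) rs_eq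
    by (simp add: inner_hills_eq tss_def)
  moreover have "semilength (to_hills rs) = n - 1"
  proof -
    have "sum_list (map semilength (map pair_spine bs)) + length bs = semilength bs"
      using even_bs by (induction bs) (auto simp: semilength_pair_spine)
    then show ?thesis
      using to_hills semilength_join_with_leaves[of tss] semilength_pair_spine[OF even_Q] rs(2) rs_eq
      by (simp add: tss_def)
  qed
  moreover have "of_hills (to_hills rs) = rs"
    using to_hills split_join_with_leaves[OF _ no_Leaf] rs_eq even_Q even_bs
    by (simp add: of_hills_def tss_def unpair_pair_spine map_idI)
  ultimately show ?thesis by (simp add: hill_trees_def)
qed

lemma of_hills_hill_trees:
  assumes "2 \<le> n" "1 \<le> k" "ss \<in> hill_trees (n - 1) (k - 1)"
  shows "of_hills ss \<in> A_trees n k \<and> to_hills (of_hills ss) = ss"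
proof -
  from assms have ss: "semilength ss = n - 1" "inner_hills ss = k - 1"
    by (auto simp: hill_trees_def)
  then have "ss \<noteq> []" using assms by auto
  define ys where "ys = butlast ss"
  define z where "z = last ss"
  have ss_eq: "ss = ys @ [z]" using \<open>ss \<noteq> []\<close> ys_def z_def by simp
  define tss where "tss = split_at_leaves ys"
  obtain as a where tss_eq: "tss = as @ [a]"
    using split_at_leaves_neq_Nil tss_def by (metis append_butlast_last_id)
  have "\<forall>ts \<in> set tss. Leaf \<notin> set ts" using Leaf_notin_split_at_leaves tss_def by blast
  then have no_Leaf: "\<forall>ts \<in> set as. Leaf \<notin> set ts" "Leaf \<notin> set a" using tss_eq by auto
  have of_hills: "of_hills ss = map unpair_spine as @ [Node z (unpair_spine a)]"
    unfolding of_hills_def Let_def using ys_def z_def tss_def tss_eq by (metis butlast_snoc last_snoc)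
  have "length tss = k"
    using length_split_at_leaves[of ys] ss(2) ss_eq assms(2) by (simp add: inner_hills_eq tss_def)
  have join: "join_with_leaves tss = ys" using join_split_at_leaves tss_def by simp
  have "semilength (map unpair_spine as) = sum_list (map semilength as) + length as"
    using no_Leaf(1) by (induction as) (auto simp: size_unpair_spine)
  then have "semilength (of_hills ss) = semilength ys + size z + 2"
    using of_hills semilength_join_with_leaves[of tss] join tss_eq \<open>length tss = k\<close> assms(2)
      size_unpair_spine[OF no_Leaf(2)]
    by simp
  then have "semilength (of_hills ss) = n" using ss(1) ss_eq assms(1) by simp
  moreover have "length (of_hills ss) = k" using of_hills tss_eq \<open>length tss = k\<close> by simp
  moreover have "\<forall>r \<in> set (butlast (of_hills ss)). even (right_spine_length r)"
    "odd (right_spine_length (last (of_hills ss)))"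
    using of_hills even_right_spine_length_unpair_spine by auto
  moreover have "map pair_spine (map unpair_spine as) = as"
    using no_Leaf(1) pair_unpair_spine by (induction as) auto
  then have "to_hills (of_hills ss) = ss"
    using of_hills join tss_eq ss_eq pair_unpair_spine[OF no_Leaf(2)] by (simp add: to_hills_def)
  ultimately show ?thesis by (simp add: A_trees_def)
qed

lemma bij_betw_to_hills:
  "2 \<le> n \<Longrightarrow> 1 \<le> k \<Longrightarrow> bij_betw to_hills (A_trees n k) (hill_trees (n - 1) (k - 1))"
  by (rule bij_betw_byWitness[where f' = of_hills]) (use to_hills_A_trees of_hills_hill_trees in blast)+

theorem theorem2:
  fixes n k :: nat
  assumes "n \<ge> 2" and "k \<ge> 1"
  shows "\<exists>f. bij_betw f {p \<in> A_set n. returns p = k}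
                       {q \<in> dyck_paths (n - 1). early_hills q = k - 1}"
proof -
  have inj: "inj_on primes_path X" for X
    using inj_primes_path by (rule inj_on_subset) simp
  have "bij_betw primes_path (A_trees n k) {p \<in> A_set n. returns p = k}"
    using A_paths_eq_image[OF assms(2)] inj by (simp add: bij_betw_def)
  moreover have "bij_betw to_hills (A_trees n k) (hill_trees (n - 1) (k - 1))"
    using bij_betw_to_hills assms by simp
  moreover have "bij_betw primes_path (hill_trees (n - 1) (k - 1))
                   {q \<in> dyck_paths (n - 1). early_hills q = k - 1}"
    using hill_paths_eq_image inj by (simp add: bij_betw_def)
  ultimately show ?thesis
    by (meson bij_betw_inv_into bij_betw_trans)
qed

end
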